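(* Let $\alpha \in \mathbb{R}_{>0}$ and $M_\alpha = \{f(\alpha) \mid f(x) \in \mathbb{N}_0[x,x^{-1}]\}$ as an additive monoid. The following are equivalent: (a) $M_\alpha$ is a UFM; (b) $M_\alpha$ is an HFM; (c) $\alpha = 1$ or $\alpha$ is transcendental.
   Context: $\mathbb{N}_0[x,x^{-1}]$ denotes the semiring of Laurent polynomials with coefficients in $\mathbb{N}_0$. For an atomic reduced additive monoid $M$ and nonzero $x\in M$, $\mathsf{Z}(x)$ denotes the set of factorizations of $x$ (formal sums of atoms, up to order, adding to $x$) and $\mathsf{L}(x)$ the set of their lengths. $M$ is a UFM (unique factorization monoid) if it is atomic and $|\mathsf{Z}(x)| = 1$ for all nonzero $x$, and an HFM (half-factorial monoid) if it is atomic and $|\mathsf{L}(x)| = 1$ for all nonzero $x$. *)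

theory Defs
  imports "HOL-Computational_Algebra.Polynomial" "HOL-Library.Multiset"
begin

text \<open>A Laurent polynomial with coefficients in N_0 is given by a finite set S of exponents
  and coefficients c :: int => nat.\<close>
definition laurent_monoid :: "real \<Rightarrow> real set" where
  "laurent_monoid \<alpha> =
     {x. \<exists>(S::int set) (c::int \<Rightarrow> nat). finite S \<and> x = (\<Sum>i\<in>S. real (c i) * \<alpha> powi i)}"

definition atoms :: "real set \<Rightarrow> real set" where
  "atoms M = {a \<in> M. a \<noteq> 0 \<and>
      \<not> (\<exists>b c. b \<in> M \<and> c \<in> M \<and> b \<noteq> 0 \<and> c \<noteq> 0 \<and> a = b + c)}"

definition factorizations :: "real set \<Rightarrow> real \<Rightarrow> real multiset set" where
  "factorizations M x = {F. set_mset F \<subseteq> atoms M \<and> sum_mset F = x}"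

definition lengths :: "real set \<Rightarrow> real \<Rightarrow> nat set" where
  "lengths M x = size ` factorizations M x"

definition atomic_monoid :: "real set \<Rightarrow> bool" where
  "atomic_monoid M \<longleftrightarrow> (\<forall>x\<in>M. x \<noteq> 0 \<longrightarrow> factorizations M x \<noteq> {})"

definition UFM :: "real set \<Rightarrow> bool" where
  "UFM M \<longleftrightarrow> atomic_monoid M \<and> (\<forall>x\<in>M. x \<noteq> 0 \<longrightarrow> card (factorizations M x) = 1)"

definition HFM :: "real set \<Rightarrow> bool" where
  "HFM M \<longleftrightarrow> atomic_monoid M \<and> (\<forall>x\<in>M. x \<noteq> 0 \<longrightarrow> card (lengths M x) = 1)"

end

theory Submission
  imports Defs
begin

text \<open>
  Multiplication by \<open>\<alpha> powi d\<close> is an automorphism of \<open>M\<^sub>\<alpha>\<close>, so either every monomial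
  \<open>\<alpha> powi i\<close> is an atom or none is; and only monomials can be atoms. Hence factorizations are
  multisets of exponents, i.e. Laurent polynomials with coefficients in \<open>\<nat>\<close>, and the length of
  a factorization is the value of that polynomial at 1. If \<open>\<alpha> = 1\<close> or \<open>\<alpha>\<close> is transcendental,
  the value at \<open>\<alpha>\<close> determines the multiset of monomials, so factorization is unique. If
  \<open>\<alpha> \<noteq> 1\<close> is algebraic, dividing out \<open>x - 1\<close> yields an integer polynomial \<open>r\<close> with
  \<open>r(\<alpha>) = 0 \<noteq> r(1)\<close>; its positive and negative parts are two factorizations of the same
  element whose lengths differ by \<open>r(1)\<close>.
\<close>

lemma UFM_imp_HFM: "UFM M \<Longrightarrow> HFM M"
  unfolding UFM_def HFM_def lengths_def by (auto simp: card_1_singleton_iff)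

lemma set_mset_subset_range_imp_image_mset:
  "set_mset F \<subseteq> range g \<Longrightarrow> \<exists>E. F = image_mset g E"
proof (induction F)
  case (add x F)
  then obtain E i where "F = image_mset g E" "x = g i" by auto
  then show ?case by (intro exI[of _ "add_mset i E"]) simp
qed simp

lemma mset_eq_sum_replicate_count: "E = (\<Sum>i\<in>set_mset E. replicate_mset (count E i) i)"
  by (rule multiset_eqI) (simp add: count_sum not_in_iff)

lemma map_poly_of_int_mult:
  "map_poly of_int (p * q) = (map_poly of_int p * map_poly of_int q :: 'a::comm_ring_1 poly)"
  by (rule poly_eqI) (simp add: coeff_map_poly coeff_mult)

lemma map_poly_of_int_power:
  "map_poly of_int (p ^ n) = (map_poly of_int p ^ n :: 'a::comm_ring_1 poly)"
  by (induction n) (simp_all add: map_poly_of_int_mult)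

lemma algebraic_int_poly_not_root_1E:
  fixes x :: real
  assumes "algebraic x" and "x \<noteq> 1"
  obtains p :: "int poly" where "poly (map_poly of_int p) x = 0" and "poly p 1 \<noteq> 0"
proof -
  obtain q :: "int poly" where "q \<noteq> 0" and q: "poly (map_poly of_int q) x = 0"
    using algebraicE'[OF assms(1)] by blast
  then obtain r where qr: "q = [:-1, 1:] ^ order 1 q * r" and "\<not> [:-1, 1:] dvd r"
    using order_decomp by blast
  then have "poly r 1 \<noteq> 0" by (simp add: poly_eq_0_iff_dvd)
  moreover have "poly (map_poly of_int r) x = 0"
    using q assms(2) by (subst (asm) qr) (simp add: map_poly_of_int_mult map_poly_of_int_power map_poly_pCons)
  ultimately show thesis using that by blast
qed

definition mset_poly :: "nat multiset \<Rightarrow> 'a::comm_ring_1 poly" where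
  "mset_poly F = (\<Sum>k\<in>#F. monom 1 k)"

lemma coeff_mset_poly: "coeff (mset_poly F) n = of_nat (count F n)"
  by (induction F) (simp_all add: mset_poly_def)

lemma poly_mset_poly: "poly (mset_poly F) x = (\<Sum>k\<in>#F. x ^ k)"
  by (induction F) (simp_all add: mset_poly_def poly_monom)

lemma mset_poly_inject:
  "(mset_poly F :: 'a::{comm_ring_1, ring_char_0} poly) = mset_poly G \<longleftrightarrow> F = G"
  by (simp add: poly_eq_iff coeff_mset_poly multiset_eq_iff)

lemma map_poly_of_int_mset_poly_diff:
  assumes "\<And>k. coeff p k = int (count F k) - int (count G k)"
  shows "map_poly of_int p = mset_poly F - mset_poly G"
  by (rule poly_eqI) (simp add: coeff_map_poly coeff_mset_poly assms)

lemma int_poly_mset_poly_diffE: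
  fixes p :: "int poly"
  obtains F G where "\<And>k. coeff p k = int (count F k) - int (count G k)"
proof
  define part where "part c = (\<Sum>k\<le>degree p. replicate_mset (nat (c k)) k)" for c :: "nat \<Rightarrow> int"
  have "count (part c) k = nat (c k)" if "\<And>k. k > degree p \<Longrightarrow> c k = 0" for c k
    using that[of k] by (cases "k \<le> degree p") (simp_all add: part_def count_sum)
  then show "coeff p k = int (count (part (coeff p)) k) - int (count (part (\<lambda>k. - coeff p k)) k)" for k
    by (simp add: coeff_eq_0)
qed

text \<open>A multiset \<open>E\<close> of exponents stands for the Laurent polynomial \<open>\<Sum>\<^sub>i count E i \<cdot> x\<^sup>i\<close>.\<close>

definition laurent_eval :: "real \<Rightarrow> int multiset \<Rightarrow> real" where
  "laurent_eval a E = (\<Sum>i\<in>#E. a powi i)"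

lemma laurent_eval_empty [simp]: "laurent_eval a {#} = 0"
  and laurent_eval_add_mset [simp]: "laurent_eval a (add_mset i E) = a powi i + laurent_eval a E"
  and laurent_eval_union [simp]: "laurent_eval a (E + F) = laurent_eval a E + laurent_eval a F"
  by (simp_all add: laurent_eval_def)

lemma laurent_eval_pos: "a > 0 \<Longrightarrow> E \<noteq> {#} \<Longrightarrow> laurent_eval a E > 0"
proof (induction E)
  case (add i E)
  then show ?case by (cases "E = {#}") (simp_all add: add_pos_pos)
qed simp

lemma laurent_eval_eq_0_iff: "a > 0 \<Longrightarrow> laurent_eval a E = 0 \<longleftrightarrow> E = {#}"
  using laurent_eval_pos[of a E] by fastforce

lemma laurent_eval_1: "laurent_eval 1 E = real (size E)"
  by (simp add: laurent_eval_def image_mset_const_eq)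

lemma laurent_eval_shift:
  "a \<noteq> 0 \<Longrightarrow> laurent_eval a (image_mset (\<lambda>i. i + d) E) = a powi d * laurent_eval a E"
  by (induction E) (simp_all add: power_int_add distrib_left mult.commute)

lemma laurent_eval_sum_replicate:
  "finite S \<Longrightarrow> laurent_eval a (\<Sum>i\<in>S. replicate_mset (c i) i) = (\<Sum>i\<in>S. real (c i) * a powi i)"
  by (induction S rule: finite_induct) (simp_all add: laurent_eval_def)

lemma laurent_eval_image_mset_int: "laurent_eval a (image_mset int F) = poly (mset_poly F) a"
  by (induction F) (simp_all add: poly_mset_poly)

lemma laurent_monoid_eq_range: "laurent_monoid a = range (laurent_eval a)"
proof safe
  fix x assume "x \<in> laurent_monoid a"
  then obtain S c where "finite S" "x = (\<Sum>i\<in>S. real (c i) * a powi i)"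
    unfolding laurent_monoid_def by blast
  then have "x = laurent_eval a (\<Sum>i\<in>S. replicate_mset (c i) i)"
    by (simp add: laurent_eval_sum_replicate)
  then show "x \<in> range (laurent_eval a)" by blast
next
  fix E
  have "laurent_eval a E = (\<Sum>i\<in>set_mset E. real (count E i) * a powi i)"
    by (subst mset_eq_sum_replicate_count) (simp add: laurent_eval_sum_replicate)
  then show "laurent_eval a E \<in> laurent_monoid a"
    unfolding laurent_monoid_def by blast
qed

lemma powi_in_laurent_monoid: "a powi i \<in> laurent_monoid a"
  unfolding laurent_monoid_eq_range by (rule range_eqI[of _ _ "{#i#}"]) simp

lemma mem_atoms_laurent_monoid_iff:
  assumes "a > 0"
  shows "x \<in> atoms (laurent_monoid a) \<longleftrightarrow> x \<in> laurent_monoid a \<and> x \<noteq> 0 \<and>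
    (\<forall>B C. laurent_eval a (B + C) = x \<longrightarrow> B = {#} \<or> C = {#})"
proof -
  have nz: "laurent_eval a E \<noteq> 0 \<longleftrightarrow> E \<noteq> {#}" for E
    using assms laurent_eval_eq_0_iff by blast
  have "(\<exists>b c. b \<in> range (laurent_eval a) \<and> c \<in> range (laurent_eval a) \<and> b \<noteq> 0 \<and> c \<noteq> 0 \<and> x = b + c)
    \<longleftrightarrow> (\<exists>B C. B \<noteq> {#} \<and> C \<noteq> {#} \<and> laurent_eval a (B + C) = x)"
  proof
    assume "\<exists>b c. b \<in> range (laurent_eval a) \<and> c \<in> range (laurent_eval a) \<and> b \<noteq> 0 \<and> c \<noteq> 0 \<and> x = b + c"
    then obtain B C where "laurent_eval a B \<noteq> 0" "laurent_eval a C \<noteq> 0" "x = laurent_eval a B + laurent_eval a C"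
      by (elim exE conjE rangeE) blast
    then show "\<exists>B C. B \<noteq> {#} \<and> C \<noteq> {#} \<and> laurent_eval a (B + C) = x"
      using nz by (intro exI[of _ B] exI[of _ C]) simp
  next
    assume "\<exists>B C. B \<noteq> {#} \<and> C \<noteq> {#} \<and> laurent_eval a (B + C) = x"
    then obtain B C where "B \<noteq> {#}" "C \<noteq> {#}" "laurent_eval a (B + C) = x" by blast
    then show "\<exists>b c. b \<in> range (laurent_eval a) \<and> c \<in> range (laurent_eval a) \<and> b \<noteq> 0 \<and> c \<noteq> 0 \<and> x = b + c"
      using nz by (intro exI[of _ "laurent_eval a B"] exI[of _ "laurent_eval a C"]) simp
  qed
  then show ?thesis
    unfolding atoms_def laurent_monoid_eq_range by blast
qed

lemma atoms_laurent_monoid_subset: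
  assumes "a > 0"
  shows "atoms (laurent_monoid a) \<subseteq> range (\<lambda>i. a powi i)"
proof
  fix x assume x: "x \<in> atoms (laurent_monoid a)"
  then have x_indec: "x \<noteq> 0" "\<And>B C. laurent_eval a (B + C) = x \<Longrightarrow> B = {#} \<or> C = {#}"
    using mem_atoms_laurent_monoid_iff[OF assms] by simp_all
  obtain E where E: "x = laurent_eval a E"
    using x unfolding atoms_def laurent_monoid_eq_range by blast
  then obtain i E' where E': "E = add_mset i E'"
    using x_indec(1) by (metis laurent_eval_empty multiset_cases)
  then have "E' = {#}" using x_indec(2)[of "{#i#}" E'] E by simp
  then show "x \<in> range (\<lambda>i. a powi i)" using E E' by simp
qed

lemma powi_in_atoms_shift:
  assumes "a > 0" and "a powi i \<in> atoms (laurent_monoid a)"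
  shows "a powi j \<in> atoms (laurent_monoid a)"
  unfolding mem_atoms_laurent_monoid_iff[OF \<open>a > 0\<close>]
proof (intro conjI allI impI powi_in_laurent_monoid)
  show "a powi j \<noteq> 0" using \<open>a > 0\<close> by simp
  fix B C assume BC: "laurent_eval a (B + C) = a powi j"
  define shift where "shift = image_mset (\<lambda>k. k + (i - j))"
  have "laurent_eval a (shift B + shift C) = a powi (i - j) * laurent_eval a (B + C)"
    using \<open>a > 0\<close> by (simp add: shift_def laurent_eval_shift distrib_left)
  also have "\<dots> = a powi (i - j) * a powi j"
    by (simp only: BC)
  also have "\<dots> = a powi i"
    using \<open>a > 0\<close> by (metis power_int_add diff_add_cancel less_irrefl)
  finally have "shift B = {#} \<or> shift C = {#}"
    using assms mem_atoms_laurent_monoid_iff by blast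
  then show "B = {#} \<or> C = {#}" by (simp add: shift_def)
qed

lemma factorizations_laurent_monoidE:
  assumes "a > 0" and "F \<in> factorizations (laurent_monoid a) x"
  obtains E where "F = image_mset (\<lambda>i. a powi i) E" and "laurent_eval a E = x"
proof -
  have "set_mset F \<subseteq> range (\<lambda>i. a powi i)"
    using assms atoms_laurent_monoid_subset unfolding factorizations_def by blast
  then obtain E where "F = image_mset (\<lambda>i. a powi i) E"
    using set_mset_subset_range_imp_image_mset by blast
  moreover from this have "laurent_eval a E = x"
    using assms(2) by (simp add: factorizations_def laurent_eval_def)
  ultimately show thesis using that by blast
qed

lemma image_mset_powi_in_factorizations:
  assumes "\<And>i. a powi i \<in> atoms (laurent_monoid a)"
  shows "image_mset (\<lambda>i. a powi i) E \<in> factorizations (laurent_monoid a) (laurent_eval a E)"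
  using assms by (auto simp: factorizations_def laurent_eval_def)

lemma atomic_laurent_monoid_imp_powi_in_atoms:
  assumes "a > 0" and "atomic_monoid (laurent_monoid a)"
  shows "a powi i \<in> atoms (laurent_monoid a)"
proof -
  obtain F where F: "F \<in> factorizations (laurent_monoid a) 1"
    using assms(2) powi_in_laurent_monoid[of a 0] unfolding atomic_monoid_def by fastforce
  then obtain x where "x \<in># F"
    unfolding factorizations_def by fastforce
  then have "x \<in> atoms (laurent_monoid a)"
    using F unfolding factorizations_def by blast
  then obtain j where "a powi j \<in> atoms (laurent_monoid a)"
    using atoms_laurent_monoid_subset[OF assms(1)] by blast
  then show ?thesis using powi_in_atoms_shift[OF assms(1)] by blast
qed

lemma laurent_eval_inj_if_transcendental:
  assumes "\<not> algebraic a" and "laurent_eval a E1 = laurent_eval a E2"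
  shows "E1 = E2"
proof -
  have "a \<noteq> 0" using assms(1) by auto
  obtain N :: nat where bound: "\<forall>k\<in>(\<lambda>i. nat (- i)) ` set_mset (E1 + E2). k \<le> N"
    using finite_nat_set_iff_bounded_le by blast
  have N: "- int N \<le> i" if "i \<in># E1 + E2" for i
  proof -
    have "nat (- i) \<le> N" using bound that by blast
    then show ?thesis by simp
  qed
  define shift where "shift E = image_mset (\<lambda>i. nat (i + int N)) E" for E
  have unshift: "image_mset (\<lambda>k. int k - int N) (shift E) = E"
    and eval: "poly (mset_poly (shift E)) a = a powi N * laurent_eval a E"
    if "E \<subseteq># E1 + E2" for E
  proof -
    have pos: "i + int N \<ge> 0" if "i \<in># E" for i
      using N[OF mset_subset_eqD[OF \<open>E \<subseteq># E1 + E2\<close> that]] by linarith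
    have "image_mset (\<lambda>k. int k - int N) (shift E) = image_mset (\<lambda>i. i) E"
      unfolding shift_def image_mset.compositionality o_def using pos by (intro image_mset_cong) simp
    then show "image_mset (\<lambda>k. int k - int N) (shift E) = E" by simp
    have "image_mset int (shift E) = image_mset (\<lambda>i. i + int N) E"
      unfolding shift_def image_mset.compositionality o_def using pos by (intro image_mset_cong) simp
    then show "poly (mset_poly (shift E)) a = a powi N * laurent_eval a E"
      using \<open>a \<noteq> 0\<close> by (simp flip: laurent_eval_image_mset_int add: laurent_eval_shift)
  qed
  have "poly (mset_poly (shift E1) - mset_poly (shift E2)) a = 0"
    using eval assms(2) by simp
  then have "mset_poly (shift E1) - mset_poly (shift E2) = (0 :: real poly)"
    using assms(1) algebraicI[of "mset_poly (shift E1) - mset_poly (shift E2)"]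
    by (auto simp: coeff_mset_poly)
  then have "shift E1 = shift E2" by (simp add: mset_poly_inject)
  then show "E1 = E2" using unshift by (metis mset_subset_eq_add_left mset_subset_eq_add_right)
qed

lemma algebraic_laurent_eval_eq_size_neqE:
  assumes "algebraic a" and "a \<noteq> 1"
  obtains E1 E2 where "laurent_eval a E1 = laurent_eval a E2" and "size E1 \<noteq> size E2"
proof -
  obtain p :: "int poly" where root: "poly (map_poly of_int p) a = 0" and "poly p 1 \<noteq> 0"
    using algebraic_int_poly_not_root_1E[OF assms] by blast
  obtain F G where FG: "\<And>k. coeff p k = int (count F k) - int (count G k)"
    using int_poly_mset_poly_diffE by blast
  have "poly (mset_poly F - mset_poly G) a = 0"
    using root by (simp only: map_poly_of_int_mset_poly_diff[OF FG])
  then have "laurent_eval a (image_mset int F) = laurent_eval a (image_mset int G)"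
    by (simp add: laurent_eval_image_mset_int)
  moreover have "p = mset_poly F - mset_poly G"
    using map_poly_of_int_mset_poly_diff[OF FG, where 'a = int] by simp
  then have "poly (mset_poly F - mset_poly G :: int poly) 1 \<noteq> 0"
    using \<open>poly p 1 \<noteq> 0\<close> by simp
  then have "size (image_mset int F) \<noteq> size (image_mset int G)"
    by (simp add: poly_mset_poly)
  ultimately show thesis using that by blast
qed

lemma HFM_laurent_monoid_imp_size_eq:
  assumes "a > 0" and HFM: "HFM (laurent_monoid a)" and eq: "laurent_eval a E1 = laurent_eval a E2"
  shows "size E1 = size E2"
proof (cases "E1 = {#}")
  case True
  then show ?thesis using eq laurent_eval_eq_0_iff[OF assms(1)] by simp
next
  case False
  let ?M = "laurent_monoid a" and ?x = "laurent_eval a E1"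
  have "?x \<in> ?M" "?x \<noteq> 0"
    using False laurent_eval_eq_0_iff[OF assms(1)] by (auto simp: laurent_monoid_eq_range)
  then have "card (lengths ?M ?x) = 1"
    using HFM unfolding HFM_def by blast
  moreover have "size E \<in> lengths ?M ?x" if "laurent_eval a E = ?x" for E
    using image_mset_powi_in_factorizations[of a E] HFM atomic_laurent_monoid_imp_powi_in_atoms[OF assms(1)] that
    unfolding lengths_def HFM_def by (metis image_eqI size_image_mset)
  ultimately show ?thesis
    using eq by (metis card_1_singletonE singletonD)
qed

lemma UFM_laurent_monoidI:
  assumes "a > 0"
    and inj: "\<And>E1 E2. laurent_eval a E1 = laurent_eval a E2 \<Longrightarrow>
      image_mset (\<lambda>i. a powi i) E1 = image_mset (\<lambda>i. a powi i) E2"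
  shows "UFM (laurent_monoid a)"
proof -
  let ?M = "laurent_monoid a"
  have atoms: "a powi i \<in> atoms ?M" for i
    unfolding mem_atoms_laurent_monoid_iff[OF assms(1)]
  proof (intro conjI allI impI powi_in_laurent_monoid)
    show "a powi i \<noteq> 0" using assms(1) by simp
    fix B C assume "laurent_eval a (B + C) = a powi i"
    then have "image_mset (\<lambda>i. a powi i) (B + C) = {#a powi i#}"
      using inj[of "B + C" "{#i#}"] by simp
    then have "size (B + C) = 1" by (metis size_image_mset size_single)
    then show "B = {#} \<or> C = {#}" by (auto simp: add_is_1)
  qed
  have "factorizations ?M x = {image_mset (\<lambda>i. a powi i) E}" if "x = laurent_eval a E" for x E
  proof (intro equalityI subsetI)
    fix F assume "F \<in> factorizations ?M x"
    then obtain E' where "F = image_mset (\<lambda>i. a powi i) E'" "laurent_eval a E' = x"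
      by (rule factorizations_laurent_monoidE[OF assms(1)])
    then show "F \<in> {image_mset (\<lambda>i. a powi i) E}" using inj[of E' E] that by simp
  qed (simp add: image_mset_powi_in_factorizations atoms that)
  then have "\<exists>F. factorizations ?M x = {F}" if "x \<in> ?M" for x
    using that unfolding laurent_monoid_eq_range by blast
  then show ?thesis
    unfolding UFM_def atomic_monoid_def by fastforce
qed

theorem proposition5p1:
  fixes \<alpha> :: real
  assumes "\<alpha> > 0"
  shows "(UFM (laurent_monoid \<alpha>) \<longleftrightarrow> HFM (laurent_monoid \<alpha>))
       \<and> (HFM (laurent_monoid \<alpha>) \<longleftrightarrow> (\<alpha> = 1 \<or> \<not> algebraic \<alpha>))"
proof -
  have "\<alpha> = 1 \<or> \<not> algebraic \<alpha>" if "HFM (laurent_monoid \<alpha>)"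
    using HFM_laurent_monoid_imp_size_eq[OF assms that] algebraic_laurent_eval_eq_size_neqE
    by metis
  moreover have "UFM (laurent_monoid \<alpha>)" if "\<alpha> = 1 \<or> \<not> algebraic \<alpha>"
  proof (rule UFM_laurent_monoidI[OF assms])
    fix E1 E2 assume eq: "laurent_eval \<alpha> E1 = laurent_eval \<alpha> E2"
    show "image_mset (\<lambda>i. \<alpha> powi i) E1 = image_mset (\<lambda>i. \<alpha> powi i) E2"
      using that
    proof
      assume "\<alpha> = 1"
      then show ?thesis using eq by (simp add: laurent_eval_1 image_mset_const_eq)
    next
      assume "\<not> algebraic \<alpha>"
      then show ?thesis using eq laurent_eval_inj_if_transcendental by blast
    qed
  qed
  ultimately show ?thesis using UFM_imp_HFM by blast
qed

end
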